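(* The facets of the convex hull in $K\otimes\mathbb R\cong\mathbb R^3$ of the set of totally positive elements of $\mathcal O$ are precisely the translates, under multiplication by totally positive units of $\mathcal O$, of the two triangles with vertices $\{1,\ w^2,\ (w+1)^2\}$ and $\{1,\ w+2,\ (w+1)^2\}$.
   Context: $w=\zeta_7+\zeta_7^{-1}$ with $\zeta_7=e^{2\pi i/7}$, $K=\mathbb Q(w)$ the totally real cubic field of discriminant $49$, $\mathcal O=\mathbb Z[w]$ its ring of integers ($w^3+w^2-2w-1=0$). $K\otimes\mathbb R$ is identified with $\mathbb R^3$ via the three real embeddings; an element is totally positive if all three images are positive. *)

theory Defs
  imports "HOL-Analysis.Analysis"
begin

text \<open>K \<otimes> R is identified with R^3 via the three real embeddings, which send
  w = zeta_7 + zeta_7^(-1) to 2 cos(2 pi k/7), k = 1,2,3.  Ring operations in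
  K \<otimes> R are componentwise operations on real^3.\<close>

definition w_emb :: "real^3" where
  "w_emb = vector [2 * cos (2*pi/7), 2 * cos (4*pi/7), 2 * cos (6*pi/7)]"

definition ints_O :: "(real^3) set" where
  "ints_O = {of_int a + of_int b * w_emb + of_int c * w_emb^2 | a b c. True}"

definition totally_positive :: "real^3 \<Rightarrow> bool" where
  "totally_positive x \<longleftrightarrow> (\<forall>i. x $ i > 0)"

definition tot_pos_O :: "(real^3) set" where
  "tot_pos_O = {x \<in> ints_O. totally_positive x}"

definition units_O :: "(real^3) set" where
  "units_O = {u \<in> ints_O. \<exists>v \<in> ints_O. u * v = 1}"

definition tot_pos_units_O :: "(real^3) set" where
  "tot_pos_units_O = {u \<in> units_O. totally_positive u}"

definition triangle1 :: "(real^3) set" where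
  "triangle1 = convex hull {1, w_emb^2, (w_emb + 1)^2}"

definition triangle2 :: "(real^3) set" where
  "triangle2 = convex hull {1, w_emb + 2, (w_emb + 1)^2}"

end

theory Submission
  imports Defs
begin

text \<open>The trace form identifies \<open>K \<otimes> \<real>\<close> with its dual.  For each triangle \<open>T\<^sub>k\<close> there is
  an element \<open>\<lambda>\<^sub>k\<close> whose trace pairing is \<open>1\<close> on the vertices of \<open>T\<^sub>k\<close> and \<open>\<ge> 1\<close> on all totally
  positive integers, with equality only at those vertices: pairing with suitable totally positive
  certificates bounds the coordinates, leaving finitely many candidates.  For a totally positive
  unit \<open>u\<close>, the functional \<open>\<lambda>\<^sub>k u\<inverse>\<close> then supports the hull exactly along the two-dimensional
  face \<open>u T\<^sub>k\<close>, which is therefore a facet.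

  Conversely, let \<open>z\<close> be a relative interior point of a facet.  Only finitely many units \<open>v\<close> have
  \<open>\<lambda>\<^sub>k(v z)\<close> bounded, so some \<open>v, k\<close> minimise it; since each \<open>T\<^sub>k\<close> is cut out of its plane by the
  planes of its three neighbours, this gives \<open>z = m u q\<close> with \<open>q \<in> T\<^sub>k\<close> and \<open>m \<ge> 1\<close>.  If \<open>m > 1\<close>,
  a supporting hyperplane at \<open>z\<close> would pass through the origin and be nonnegative on the totally
  positive integers, which powers of units with a dominant real embedding rule out.  Hence
  \<open>z \<in> u T\<^sub>k\<close>, and the facet is \<open>u T\<^sub>k\<close>.\<close>

section \<open>The real embeddings of \<open>w\<close>\<close>

abbreviation w1 :: real where "w1 \<equiv> w_emb $ 1"
abbreviation w2 :: real where "w2 \<equiv> w_emb $ 2"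
abbreviation w3 :: real where "w3 \<equiv> w_emb $ 3"

lemma w1_sq: "w1\<^sup>2 = w2 + 2"
proof -
  have "cos (4*pi/7) = cos (2*(2*pi/7))" by (simp add: field_simps)
  also have "\<dots> = 2 * cos (2*pi/7)^2 - 1" by (rule cos_double_cos)
  finally show ?thesis by (simp add: w_emb_def power_mult_distrib)
qed

lemma w2_sq: "w2\<^sup>2 = w3 + 2"
proof -
  have "cos (6*pi/7) = cos (2*pi - 2*(4*pi/7))" by (simp add: field_simps)
  also have "\<dots> = cos (2*(4*pi/7))" by (rule cos_2pi_minus)
  also have "\<dots> = 2 * cos (4*pi/7)^2 - 1" by (rule cos_double_cos)
  finally show ?thesis by (simp add: w_emb_def power_mult_distrib)
qed

lemma w1_gt_1: "1 < w1" and w1_lt: "w1 < 3/2"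
proof -
  have "cos (pi/3) < cos (2*pi/7)"
    by (subst cos_mono_less_eq) (auto simp: field_simps)
  moreover have "cos (2*pi/7) < cos (pi/4)"
    by (subst cos_mono_less_eq) (auto simp: field_simps)
  moreover have "sqrt 2 < 3/2" by (rule real_less_lsqrt) (auto simp: power2_eq_square)
  ultimately show "1 < w1" "w1 < 3/2" by (simp_all add: w_emb_def cos_60 cos_45)
qed

lemma w1_root: "w1^3 + w1\<^sup>2 - 2*w1 - 1 = 0"
proof -
  define c where "c = cos (2*pi/7)"
  have "cos (3*(2*pi/7)) = cos (2*pi - 3*(2*pi/7))" by (rule cos_2pi_minus[symmetric])
  also have "2*pi - 3*(2*pi/7) = 2*(2*(2*pi/7))" by (simp add: field_simps)
  finally have "4*c^3 - 3*c = 2*(2*c\<^sup>2 - 1)\<^sup>2 - 1"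
    unfolding c_def cos_treble_cos cos_double_cos .
  then have "(2*c - 2) * ((2*c)^3 + (2*c)\<^sup>2 - 2*(2*c) - 1) = 0"
    by (simp add: algebra_simps power2_eq_square power3_eq_cube)
  moreover have "2*c \<noteq> 2" using w1_gt_1 w1_lt by (simp add: w_emb_def c_def)
  ultimately show ?thesis by (simp add: w_emb_def c_def)
qed

lemma w3_sq: "w3\<^sup>2 = w1 + 2"
  using w1_root w1_sq w2_sq by algebra

lemma w_emb_root: "(w_emb $ i)^3 + (w_emb $ i)\<^sup>2 - 2 * w_emb $ i - 1 = 0"
proof -
  have "w2^3 + w2\<^sup>2 - 2*w2 - 1 = 0" "w3^3 + w3\<^sup>2 - 2*w3 - 1 = 0"
    using w1_root w1_sq w2_sq by algebra+
  then show ?thesis using exhaust_3[of i] w1_root by auto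
qed

lemma w_emb_power_sums:
  "w1 + w2 + w3 = -1" "w1\<^sup>2 + w2\<^sup>2 + w3\<^sup>2 = 5" "w1^3 + w2^3 + w3^3 = -4" "w1^4 + w2^4 + w3^4 = 13"
  using w1_root w1_sq w2_sq by algebra+

lemma min_poly_root_bounds:
  fixes l t r :: real
  assumes "1 \<le> l" "1 \<le> r" "1 \<le> t" "t^3 + t\<^sup>2 - 2*t - 1 = 0"
    and "l^3 + l\<^sup>2 - 2*l - 1 < 0" "0 < r^3 + r\<^sup>2 - 2*r - 1"
  shows "l < t" "t < r"
proof -
  have mono: "y^3 + y\<^sup>2 - 2*y - 1 \<le> z^3 + z\<^sup>2 - 2*z - 1" if "1 \<le> y" "y \<le> z" for y z :: real
  proof -
    have "1 \<le> z*z" "1 \<le> y*y" "1 \<le> z*y" using that by (metis mult_mono mult_1 order.trans zero_le_one)+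
    then have "0 \<le> (z - y) * (z*z + z*y + y*y + z + y - 2)" using that by simp
    then show ?thesis by (simp add: algebra_simps power2_eq_square power3_eq_cube)
  qed
  show "l < t" using mono[of t l] assms by linarith
  show "t < r" using mono[of r t] assms by linarith
qed

lemma w_emb_bounds:
  "(1246979603/1000000000::real) < w1" "w1 < 1246979604/1000000000"
  "-44504187/100000000 < w2" "w2 < -44504186/100000000"
  "-180193775/100000000 < w3" "w3 < -180193773/100000000"
proof -
  show w1l: "1246979603/1000000000 < w1" and w1r: "w1 < 1246979604/1000000000"
    using min_poly_root_bounds[of "1246979603/1000000000" "1246979604/1000000000" w1] w1_gt_1 w1_root
    by (simp_all add: power2_eq_square power3_eq_cube)
  have "(1246979603/1000000000::real)\<^sup>2 < w1\<^sup>2" "w1\<^sup>2 < (1246979604/1000000000::real)\<^sup>2"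
    using w1l w1r by (intro power_strict_mono; simp)+
  then show w2l: "-44504187/100000000 < w2" and w2r: "w2 < -44504186/100000000"
    unfolding w1_sq by (simp_all add: power2_eq_square)
  have "(44504186/100000000::real)\<^sup>2 < (-w2)\<^sup>2" "(-w2)\<^sup>2 < (44504187/100000000::real)\<^sup>2"
    using w2l w2r by (intro power_strict_mono; simp)+
  then show "-180193775/100000000 < w3" "w3 < -180193773/100000000"
    unfolding power2_minus w2_sq by (simp_all add: power2_eq_square)
qed

section \<open>Coordinates and the trace form\<close>

lemma vector_power_component: "((x :: 'a::comm_ring_1^'n) ^ k) $ i = (x $ i) ^ k"
  by (induct k) simp_all

lemma vector_of_int_component: "(of_int k :: 'a::comm_ring_1^'n) $ i = of_int k"
  by (cases k) (simp_all add: of_nat_index)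

lemma inner_vec3: "(x :: real^3) \<bullet> y = x$1 * y$1 + x$2 * y$2 + x$3 * y$3"
  by (simp add: inner_vec_def sum_3)

lemma inner_mult_assoc: "(a :: real^'n) \<bullet> (b * x) = (a * b) \<bullet> x"
  by (simp add: inner_vec_def mult.assoc)

lemma inner_pos_if_components_pos:
  fixes x y :: "real^'n"
  assumes "\<And>i. 0 < x$i" "\<And>i. 0 < y$i"
  shows "0 < x \<bullet> y"
  unfolding inner_vec_def by (rule sum_pos) (simp_all add: assms)

lemma totally_positive_iff: "totally_positive x \<longleftrightarrow> 0 < x$1 \<and> 0 < x$2 \<and> 0 < x$3"
  unfolding totally_positive_def forall_3 ..

definition elem_O :: "int \<Rightarrow> int \<Rightarrow> int \<Rightarrow> real^3" where
  "elem_O a b c = of_int a + of_int b * w_emb + of_int c * w_emb\<^sup>2"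

lemma ints_O_iff: "x \<in> ints_O \<longleftrightarrow> (\<exists>a b c. x = elem_O a b c)"
  by (auto simp: ints_O_def elem_O_def)

lemma tot_pos_O_iff: "x \<in> tot_pos_O \<longleftrightarrow> (\<exists>a b c. x = elem_O a b c) \<and> totally_positive x"
  by (simp add: tot_pos_O_def ints_O_iff)

lemma elem_O_component: "elem_O a b c $ i = of_int a + of_int b * w_emb $ i + of_int c * (w_emb $ i)\<^sup>2"
  by (simp add: elem_O_def vector_power_component vector_of_int_component)

lemma elem_O_components:
  "elem_O a b c $ 1 = of_int a + of_int b * w1 + of_int c * (w2 + 2)"
  "elem_O a b c $ 2 = of_int a + of_int b * w2 + of_int c * (w3 + 2)"
  "elem_O a b c $ 3 = of_int a + of_int b * w3 + of_int c * (w1 + 2)"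
  by (simp_all add: elem_O_component w1_sq w2_sq w3_sq)

lemma mult_mod_min_poly:
  fixes t a b c d e f :: real
  assumes "t^3 + t\<^sup>2 - 2*t - 1 = 0"
  shows "(a + b*t + c*t\<^sup>2) * (d + e*t + f*t\<^sup>2) =
    (a*d + (b*f + c*e) - c*f) + (a*e + b*d + 2*(b*f + c*e) - c*f) * t
      + (a*f + b*e + c*d - (b*f + c*e) + 3*(c*f)) * t\<^sup>2"
proof -
  have "(a + b*t + c*t\<^sup>2) * (d + e*t + f*t\<^sup>2) -
    ((a*d + (b*f + c*e) - c*f) + (a*e + b*d + 2*(b*f + c*e) - c*f) * t
      + (a*f + b*e + c*d - (b*f + c*e) + 3*(c*f)) * t\<^sup>2)
    = (b*f + c*e + c*f*(t - 1)) * (t^3 + t\<^sup>2 - 2*t - 1)"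
    by (simp add: algebra_simps power2_eq_square power3_eq_cube)
  then show ?thesis using assms by simp
qed

lemma elem_O_mult: "elem_O a b c * elem_O d e f =
  elem_O (a*d + (b*f + c*e) - c*f) (a*e + b*d + 2*(b*f + c*e) - c*f)
         (a*f + b*e + c*d - (b*f + c*e) + 3*(c*f))"
  by (simp add: vec_eq_iff elem_O_component mult_mod_min_poly[OF w_emb_root])

lemma elem_O_1: "elem_O 1 0 0 = 1"
  by (simp add: elem_O_def)

lemma ints_O_mult: "x \<in> ints_O \<Longrightarrow> y \<in> ints_O \<Longrightarrow> x * y \<in> ints_O"
  unfolding ints_O_iff using elem_O_mult by blast

definition elem_R :: "real \<Rightarrow> real \<Rightarrow> real \<Rightarrow> real^3" where
  "elem_R m0 m1 m2 = m0 *\<^sub>R 1 + m1 *\<^sub>R w_emb + m2 *\<^sub>R w_emb\<^sup>2"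

lemma elem_R_component: "elem_R m0 m1 m2 $ i = m0 + m1 * w_emb $ i + m2 * (w_emb $ i)\<^sup>2"
  by (simp add: elem_R_def vector_power_component)

text \<open>The standard inner product on \<open>K \<otimes> \<real>\<close> is the trace form \<open>Tr(xy)\<close>; the coefficients
  below are the traces of \<open>w^k\<close>, \<open>k = 0..4\<close>.\<close>
lemma inner_elem_R_elem_O: "elem_R m0 m1 m2 \<bullet> elem_O a b c =
  of_int a * (3*m0 - m1 + 5*m2) + of_int b * (-m0 + 5*m1 - 4*m2) + of_int c * (5*m0 - 4*m1 + 13*m2)"
proof -
  let ?a = "real_of_int a" and ?b = "real_of_int b" and ?c = "real_of_int c"
  have "elem_R m0 m1 m2 \<bullet> elem_O a b c = 3*(m0*?a) + (m0*?b + m1*?a) * (w1 + w2 + w3)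
      + (m0*?c + m1*?b + m2*?a) * (w1\<^sup>2 + w2\<^sup>2 + w3\<^sup>2)
      + (m1*?c + m2*?b) * (w1^3 + w2^3 + w3^3) + (m2*?c) * (w1^4 + w2^4 + w3^4)"
    unfolding inner_vec3 elem_R_component elem_O_component
    by (simp add: algebra_simps power2_eq_square power3_eq_cube power4_eq_xxxx)
  then show ?thesis unfolding w_emb_power_sums by (simp add: algebra_simps)
qed

text \<open>Linear inequalities valid on totally positive elements of \<open>O\<close> come from the trace pairing
  with a totally positive element \<open>elem_R ma mb mc\<close> (the middle hypotheses list its components).
  The coefficients \<open>ta, tb, tc\<close> are parameters so that the rule unifies with a goal whose
  coefficients are numerals.\<close>
lemma trace_certificate:
  fixes a b c :: int and ma mb mc ta tb tc :: real
  assumes "totally_positive (elem_O a b c)"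
    and "0 < ma + 2*mc + mb*w1 + mc*w2" "0 < ma + 2*mc + mb*w2 + mc*w3" "0 < ma + 2*mc + mb*w3 + mc*w1"
    and "ta = 3*ma - mb + 5*mc" "tb = -ma + 5*mb - 4*mc" "tc = 5*ma - 4*mb + 13*mc"
  shows "0 < of_int a * ta + of_int b * tb + of_int c * tc"
proof -
  have "0 < elem_R ma mb mc $ i" for i
    using exhaust_3[of i] assms(2-4) by (auto simp: elem_R_component w1_sq w2_sq w3_sq algebra_simps)
  then have "0 < elem_R ma mb mc \<bullet> elem_O a b c"
    using assms(1) unfolding totally_positive_def by (intro inner_pos_if_components_pos) auto
  then show ?thesis unfolding inner_elem_R_elem_O using assms(5-7) by simp
qed

section \<open>The facet normals\<close>

text \<open>\<open>facet_normal k\<close> is the element of \<open>K \<otimes> \<real>\<close> whose trace pairing is \<open>1\<close> on the three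
  vertices of \<open>T\<^sub>k\<close>.\<close>
definition facet_normal :: "int \<Rightarrow> real^3" where
  "facet_normal k = (if k = 1 then elem_R (9/14) (-1/7) (-3/14) else elem_R (2/7) (-1/7) 0)"

definition facet_vertices :: "int \<Rightarrow> (real^3) set" where
  "facet_vertices k = (if k = 1 then {elem_O 1 0 0, elem_O 0 0 1, elem_O 1 2 1}
                                 else {elem_O 1 0 0, elem_O 2 1 0, elem_O 1 2 1})"

lemma facet_normal_elem_O:
  "facet_normal 1 \<bullet> elem_O a b c = of_int a - of_int b / 2 + of_int c"
  "facet_normal 2 \<bullet> elem_O a b c = of_int a - of_int b + 2 * of_int c"
  by (simp_all add: facet_normal_def inner_elem_R_elem_O)

lemma triangle_eq: "triangle1 = convex hull facet_vertices 1" "triangle2 = convex hull facet_vertices 2"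
  by (simp_all add: triangle1_def triangle2_def facet_vertices_def elem_O_def power2_eq_square algebra_simps)

text \<open>Together with the hypothesis, each trace certificate bounds one coordinate from one side; the
  remaining candidates are checked numerically.\<close>
lemma tot_pos_normal_1_le_1:
  assumes pos: "totally_positive (elem_O a b c)"
    and le: "of_int a - of_int b / 2 + of_int c \<le> (1::real)"
  shows "(a, b, c) \<in> {(1,0,0), (0,0,1), (1,2,1)}"
proof -
  have "(0::real) < of_int a * (1/2) + of_int b * (-3/4) + of_int c * (3/2)"
    by (rule trace_certificate[OF pos, where ma="-1/28" and mb="-1/14" and mc="3/28"]) (use w_emb_bounds in linarith)+
  moreover have "(0::real) < of_int a * 2 + of_int b * (-1/2) + of_int c * 1"
    by (rule trace_certificate[OF pos, where ma="23/14" and mb="-2/7" and mc="-9/14"]) (use w_emb_bounds in linarith)+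
  moreover have "(0::real) < of_int a * 4 + of_int b * (-3) + of_int c * 4"
    by (rule trace_certificate[OF pos, where ma="19/7" and mb="-6/7" and mc="-1"]) (use w_emb_bounds in linarith)+
  moreover have "(0::real) < of_int a * 1 + of_int b * (1/2) + of_int c * 1"
    by (rule trace_certificate[OF pos, where ma="1/2" and mb="1/7" and mc="-1/14"]) (use w_emb_bounds in linarith)+
  moreover have "(0::real) < of_int a * 2 + of_int b * (-1) + of_int c * 1"
    by (rule trace_certificate[OF pos, where ma="12/7" and mb="-3/7" and mc="-5/7"]) (use w_emb_bounds in linarith)+
  moreover have "(0::real) < of_int a * 1 + of_int b * (-1/2) + of_int c * 2"
    by (rule trace_certificate[OF pos, where ma="3/14" and mb="0" and mc="1/14"]) (use w_emb_bounds in linarith)+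
  ultimately have "-1 < real_of_int a" "real_of_int a < 2" "-1 < real_of_int b" "real_of_int b < 4"
    "-1 < real_of_int c" "real_of_int c < 2"
    using le by linarith+
  then have "a = 0 \<or> a = 1" "b = 0 \<or> b = 1 \<or> b = 2 \<or> b = 3" "c = 0 \<or> c = 1"
    by linarith+
  then show ?thesis
    using pos le w_emb_bounds
    by (elim disjE; simp add: totally_positive_iff elem_O_components algebra_simps)
qed

lemma tot_pos_normal_2_le_1:
  assumes pos: "totally_positive (elem_O a b c)"
    and le: "of_int a - of_int b + 2 * of_int c \<le> (1::real)"
  shows "(a, b, c) \<in> {(1,0,0), (2,1,0), (1,2,1)}"
proof -
  have "(0::real) < of_int a * 2 + of_int b * (-3) + of_int c * 6"
    by (rule trace_certificate[OF pos, where ma="-1/7" and mb="-2/7" and mc="3/7"]) (use w_emb_bounds in linarith)+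
  moreover have "(0::real) < of_int a * 2 + of_int b * (-1) + of_int c * 2"
    by (rule trace_certificate[OF pos, where ma="9/7" and mb="-2/7" and mc="-3/7"]) (use w_emb_bounds in linarith)+
  moreover have "(0::real) < of_int a * 5 + of_int b * (-6) + of_int c * 10"
    by (rule trace_certificate[OF pos, where ma="11/7" and mb="-1" and mc="-1/7"]) (use w_emb_bounds in linarith)+
  moreover have "(0::real) < of_int a * 1 + of_int b * 0 + of_int c * 2"
    by (rule trace_certificate[OF pos, where ma="1/7" and mb="1/7" and mc="1/7"]) (use w_emb_bounds in linarith)+
  moreover have "(0::real) < of_int a * 2 + of_int b * (-2) + of_int c * 3"
    by (rule trace_certificate[OF pos, where ma="1" and mb="-3/7" and mc="-2/7"]) (use w_emb_bounds in linarith)+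
  moreover have "(0::real) < of_int a * 2 + of_int b * (-2) + of_int c * 5"
    by (rule trace_certificate[OF pos, where ma="1/7" and mb="-1/7" and mc="2/7"]) (use w_emb_bounds in linarith)+
  ultimately have "-1 < real_of_int a" "real_of_int a < 3" "-1 < real_of_int b" "real_of_int b < 5"
    "-2 < real_of_int c" "real_of_int c < 2"
    using le by linarith+
  then have "a = 0 \<or> a = 1 \<or> a = 2" "b = 0 \<or> b = 1 \<or> b = 2 \<or> b = 3 \<or> b = 4" "c = -1 \<or> c = 0 \<or> c = 1"
    by linarith+
  then show ?thesis
    using pos le w_emb_bounds
    by (elim disjE; simp add: totally_positive_iff elem_O_components algebra_simps)
qed

lemma facet_normal_tot_pos:
  assumes k: "k \<in> {1,2}" and x: "x \<in> tot_pos_O"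
  shows facet_normal_ge_1: "1 \<le> facet_normal k \<bullet> x"
    and facet_normal_eq_1_iff: "facet_normal k \<bullet> x = 1 \<longleftrightarrow> x \<in> facet_vertices k"
proof -
  obtain a b c where abc: "x = elem_O a b c" "totally_positive (elem_O a b c)"
    using x by (auto simp: tot_pos_O_iff)
  have vertex: "facet_normal k \<bullet> y = 1" if "y \<in> facet_vertices k" for y
    using k that by (auto simp: facet_vertices_def facet_normal_elem_O)
  have "x \<in> facet_vertices k" if "facet_normal k \<bullet> x \<le> 1"
    using k that abc tot_pos_normal_1_le_1[OF abc(2)] tot_pos_normal_2_le_1[OF abc(2)]
    by (auto simp: facet_normal_elem_O facet_vertices_def)
  then show "1 \<le> facet_normal k \<bullet> x" "facet_normal k \<bullet> x = 1 \<longleftrightarrow> x \<in> facet_vertices k"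
    using vertex by force+
qed

section \<open>Totally positive elements and units\<close>

lemma tot_pos_O_mult: "x \<in> tot_pos_O \<Longrightarrow> y \<in> tot_pos_O \<Longrightarrow> x * y \<in> tot_pos_O"
  by (auto simp: tot_pos_O_def totally_positive_def ints_O_mult)

lemma elem_O_in_tot_pos_O: "totally_positive (elem_O a b c) \<Longrightarrow> elem_O a b c \<in> tot_pos_O"
  by (auto simp: tot_pos_O_iff)

lemma tot_pos_O_power: "x \<in> tot_pos_O \<Longrightarrow> x ^ n \<in> tot_pos_O"
  by (induct n) (use elem_O_in_tot_pos_O[of 1 0 0] in \<open>simp_all add: elem_O_1 totally_positive_def tot_pos_O_mult\<close>)

lemma tot_pos_O_scaleR:
  assumes "x \<in> tot_pos_O" "1 \<le> n"
  shows "real n *\<^sub>R x \<in> tot_pos_O"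
proof -
  obtain a b c where "x = elem_O a b c" "totally_positive x" using assms(1) by (auto simp: tot_pos_O_iff)
  moreover have "real n *\<^sub>R elem_O a b c = elem_O (int n * a) (int n * b) (int n * c)"
    by (simp add: vec_eq_iff elem_O_component algebra_simps)
  moreover have "totally_positive (real n *\<^sub>R x)"
    using \<open>totally_positive x\<close> assms(2) by (simp add: totally_positive_def)
  ultimately show ?thesis by (auto simp: tot_pos_O_iff)
qed

lemma facet_vertices_subset: "k \<in> {1,2} \<Longrightarrow> facet_vertices k \<subseteq> tot_pos_O"
  using w_emb_bounds
  by (auto simp: facet_vertices_def totally_positive_iff elem_O_components intro!: elem_O_in_tot_pos_O)

lemma tot_pos_units_O_subset: "tot_pos_units_O \<subseteq> tot_pos_O"
  by (auto simp: tot_pos_units_O_def tot_pos_O_def units_O_def)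

lemma tot_pos_units_O_pos: "u \<in> tot_pos_units_O \<Longrightarrow> 0 < u $ i"
  by (auto simp: tot_pos_units_O_def totally_positive_def)

lemma tot_pos_units_O_inverse:
  assumes "u \<in> tot_pos_units_O"
  obtains v where "v \<in> tot_pos_units_O" "u * v = 1" "v * u = 1"
proof -
  obtain v where v: "v \<in> ints_O" "u * v = 1" and u: "u \<in> ints_O" "totally_positive u"
    using assms by (auto simp: tot_pos_units_O_def units_O_def)
  have "u $ i * v $ i = 1" "0 < u $ i" for i
    using v u by (simp_all add: totally_positive_def flip: vector_mult_component)
  then have "0 < v $ i" for i by (metis zero_less_mult_pos zero_less_one)
  then have "v \<in> tot_pos_units_O"
    using u v by (auto simp: tot_pos_units_O_def units_O_def totally_positive_def mult.commute)
  then show ?thesis using that v(2) by (simp add: mult.commute)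
qed

lemma tot_pos_units_O_mult:
  assumes "u \<in> tot_pos_units_O" "v \<in> tot_pos_units_O"
  shows "u * v \<in> tot_pos_units_O"
proof -
  obtain u' v' where "u' \<in> tot_pos_units_O" "u * u' = 1" "v' \<in> tot_pos_units_O" "v * v' = 1"
    using assms tot_pos_units_O_inverse by metis
  then have "(u * v) * (v' * u') = 1" "v' * u' \<in> ints_O"
    by (auto simp: tot_pos_units_O_def units_O_def ints_O_mult algebra_simps)
  moreover have "u * v \<in> tot_pos_O"
    using assms tot_pos_units_O_subset tot_pos_O_mult by blast
  ultimately show ?thesis by (auto simp: tot_pos_units_O_def units_O_def tot_pos_O_def)
qed

lemma elem_O_in_tot_pos_units_O:
  assumes "elem_O a b c * elem_O d e f = 1" "totally_positive (elem_O a b c)"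
  shows "elem_O a b c \<in> tot_pos_units_O"
  using assms ints_O_iff unfolding tot_pos_units_O_def units_O_def by blast

lemma one_in_tot_pos_units_O: "1 \<in> tot_pos_units_O"
  using elem_O_in_tot_pos_units_O[of 1 0 0 1 0 0] by (simp add: elem_O_1 totally_positive_def)

text \<open>The units \<open>w + 2\<close>, \<open>(w + 2)\<inverse>\<close>, \<open>w\<^sup>2\<close>, \<open>w\<^sup>-\<^sup>2\<close> and \<open>(w + 1)\<^sup>-\<^sup>2\<close>.\<close>
lemma elems_in_tot_pos_units_O:
  "elem_O 2 1 0 \<in> tot_pos_units_O" "elem_O 0 (-1) 1 \<in> tot_pos_units_O"
  "elem_O 0 0 1 \<in> tot_pos_units_O" "elem_O 5 (-1) (-2) \<in> tot_pos_units_O"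
  "elem_O 3 (-1) (-1) \<in> tot_pos_units_O"
  by (rule elem_O_in_tot_pos_units_O[where d=0 and e="-1" and f=1]
        elem_O_in_tot_pos_units_O[where d=2 and e=1 and f=0]
        elem_O_in_tot_pos_units_O[where d=5 and e="-1" and f="-2"]
        elem_O_in_tot_pos_units_O[where d=0 and e=0 and f=1]
        elem_O_in_tot_pos_units_O[where d=1 and e=2 and f=1];
      use w_emb_bounds in \<open>simp add: elem_O_mult elem_O_1 totally_positive_iff elem_O_components\<close>)+

section \<open>Triangles cut out by their neighbours\<close>

locale cut_out_triangle =
  fixes P1 P2 P3 N N1 N2 N3 :: "real^3"
  assumes on_plane: "N \<bullet> P1 = 1" "N \<bullet> P2 = 1" "N \<bullet> P3 = 1"
    and edge1: "1 < N1 \<bullet> P1" "N1 \<bullet> P2 = 1" "N1 \<bullet> P3 = 1"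
    and edge2: "N2 \<bullet> P1 = 1" "1 < N2 \<bullet> P2" "N2 \<bullet> P3 = 1"
    and edge3: "N3 \<bullet> P1 = 1" "N3 \<bullet> P2 = 1" "1 < N3 \<bullet> P3"
begin

lemma inner_lin_comb:
  assumes "q = t1 *\<^sub>R P1 + t2 *\<^sub>R P2 + t3 *\<^sub>R P3"
  shows "N \<bullet> q = t1 + t2 + t3"
    and "N1 \<bullet> q = t1 + t2 + t3 + t1 * (N1 \<bullet> P1 - 1)"
    and "N2 \<bullet> q = t1 + t2 + t3 + t2 * (N2 \<bullet> P2 - 1)"
    and "N3 \<bullet> q = t1 + t2 + t3 + t3 * (N3 \<bullet> P3 - 1)"
  using on_plane edge1 edge2 edge3 by (simp_all add: assms inner_add_right algebra_simps)

lemma distinct_vertices: "P1 \<noteq> P2" "P1 \<noteq> P3" "P2 \<noteq> P3"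
  using edge1 edge2 by auto

lemma lin_comb_eq_0:
  assumes "t1 *\<^sub>R P1 + t2 *\<^sub>R P2 + t3 *\<^sub>R P3 = 0"
  shows "t1 = 0" "t2 = 0" "t3 = 0"
  using inner_lin_comb[OF assms[symmetric]] edge1 edge2 edge3 by simp_all

lemma sum_vertices: "(\<Sum>v\<in>{P1,P2,P3}. t v *\<^sub>R v) = t P1 *\<^sub>R P1 + t P2 *\<^sub>R P2 + t P3 *\<^sub>R P3"
  using distinct_vertices by (simp add: algebra_simps)

lemma aff_dim_hull: "aff_dim (convex hull {P1,P2,P3}) = 2"
proof -
  have "\<not> affine_dependent {P1,P2,P3}"
    using lin_comb_eq_0 by (auto simp: affine_dependent_explicit_finite sum_vertices)
  then show ?thesis
    using aff_dim_affine_independent distinct_vertices by (fastforce simp: aff_dim_convex_hull)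
qed

lemma span_vertices: "span {P1,P2,P3} = UNIV"
proof -
  have "independent {P1,P2,P3}"
    using lin_comb_eq_0 by (auto simp: dependent_finite sum_vertices)
  then have "dim {P1,P2,P3} = 3"
    using distinct_vertices by (simp add: dim_eq_card_independent)
  then show ?thesis using dim_eq_full by fastforce
qed

lemma mem_hullI:
  assumes "N \<bullet> q = 1" "1 \<le> N1 \<bullet> q" "1 \<le> N2 \<bullet> q" "1 \<le> N3 \<bullet> q"
  shows "q \<in> convex hull {P1,P2,P3}"
proof -
  obtain t where q: "q = t P1 *\<^sub>R P1 + t P2 *\<^sub>R P2 + t P3 *\<^sub>R P3"
    using span_vertices by (auto simp: span_finite sum_vertices)
  note eqs = inner_lin_comb[OF q]
  have "0 \<le> t P1 * (N1 \<bullet> P1 - 1)" "0 \<le> t P2 * (N2 \<bullet> P2 - 1)" "0 \<le> t P3 * (N3 \<bullet> P3 - 1)"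
    using assms eqs by linarith+
  then have "0 \<le> t P1" "0 \<le> t P2" "0 \<le> t P3"
    using edge1 edge2 edge3 by (simp_all add: zero_le_mult_iff)
  moreover have "t P1 + t P2 + t P3 = 1" using assms(1) eqs(1) by simp
  ultimately show ?thesis
    unfolding convex_hull_3 using q by blast
qed

end

text \<open>The edge constraints of each triangle are the normals of its three neighbouring facets.\<close>
interpretation facet_triangle_1: cut_out_triangle
  "elem_O 1 0 0" "elem_O 0 0 1" "elem_O 1 2 1" "facet_normal 1"
  "facet_normal 2 * elem_O 5 (-1) (-2)" "facet_normal 2" "facet_normal 2 * elem_O 2 1 0"
  by unfold_locales (simp_all flip: inner_mult_assoc add: elem_O_mult facet_normal_elem_O)

interpretation facet_triangle_2: cut_out_triangle
  "elem_O 1 0 0" "elem_O 2 1 0" "elem_O 1 2 1" "facet_normal 2"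
  "facet_normal 1 * elem_O 0 (-1) 1" "facet_normal 1" "facet_normal 1 * elem_O 0 0 1"
  by unfold_locales (simp_all flip: inner_mult_assoc add: elem_O_mult facet_normal_elem_O)

lemma aff_dim_facet_triangle: "k \<in> {1,2} \<Longrightarrow> aff_dim (convex hull facet_vertices k) = 2"
  using facet_triangle_1.aff_dim_hull facet_triangle_2.aff_dim_hull by (auto simp: facet_vertices_def)

lemma mem_facet_triangle:
  assumes k: "k \<in> {1,2}" and on_plane: "facet_normal k \<bullet> q = 1"
    and ge: "\<And>v j. v \<in> tot_pos_units_O \<Longrightarrow> j \<in> {1,2} \<Longrightarrow> 1 \<le> (facet_normal j * v) \<bullet> q"
  shows "q \<in> convex hull facet_vertices k"
proof -
  have "1 \<le> facet_normal j \<bullet> q" if "j \<in> {1,2}" for j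
    using ge[OF one_in_tot_pos_units_O that] by simp
  then show ?thesis
    using k on_plane elems_in_tot_pos_units_O
      facet_triangle_1.mem_hullI[of q] facet_triangle_2.mem_hullI[of q] ge[of _ 1] ge[of _ 2]
    by (auto simp: facet_vertices_def)
qed

section \<open>The facets \<open>u T\<^sub>k\<close>\<close>

lemma convex_hull_Int_supporting_hyperplane:
  fixes S :: "'a::real_inner set"
  assumes ge: "\<And>x. x \<in> S \<Longrightarrow> b \<le> a \<bullet> x"
  shows "convex hull S \<inter> {x. a \<bullet> x = b} = convex hull (S \<inter> {x. a \<bullet> x = b})"
proof
  show "convex hull (S \<inter> {x. a \<bullet> x = b}) \<subseteq> convex hull S \<inter> {x. a \<bullet> x = b}"
    by (simp add: hull_mono hull_minimal convex_hyperplane)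
next
  show "convex hull S \<inter> {x. a \<bullet> x = b} \<subseteq> convex hull (S \<inter> {x. a \<bullet> x = b})"
  proof
    fix x assume "x \<in> convex hull S \<inter> {x. a \<bullet> x = b}"
    then obtain T u where T: "finite T" "T \<subseteq> S" "\<forall>v\<in>T. 0 \<le> u v" "sum u T = 1"
      "(\<Sum>v\<in>T. u v *\<^sub>R v) = x" and ax: "a \<bullet> x = b"
      unfolding convex_hull_explicit by blast
    have "a \<bullet> x = (\<Sum>v\<in>T. u v * (a \<bullet> v))" "b = (\<Sum>v\<in>T. u v * b)"
      using T(4,5) by (auto simp: inner_sum_right simp flip: sum_distrib_right)
    then have "(\<Sum>v\<in>T. u v * (a \<bullet> v - b)) = 0"
      using ax by (simp add: right_diff_distrib sum_subtractf)
    moreover have "\<forall>v\<in>T. 0 \<le> u v * (a \<bullet> v - b)" using T(2,3) ge by fastforce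
    ultimately have "\<forall>v\<in>T. u v * (a \<bullet> v - b) = 0"
      using sum_nonneg_eq_0_iff[OF T(1), of "\<lambda>v. u v * (a \<bullet> v - b)"] by simp
    define T' where "T' = {v\<in>T. a \<bullet> v = b}"
    have zero: "\<forall>v\<in>T - T'. u v = 0"
      using \<open>\<forall>v\<in>T. u v * (a \<bullet> v - b) = 0\<close> by (auto simp: T'_def)
    have T': "finite T'" "T' \<subseteq> T" "T' \<subseteq> S \<inter> {x. a \<bullet> x = b}"
      using T(1,2) by (auto simp: T'_def)
    have "sum u T' = 1" "(\<Sum>v\<in>T'. u v *\<^sub>R v) = x"
      using sum.mono_neutral_left[OF T(1) T'(2), of u] sum.mono_neutral_left[OF T(1) T'(2), of "\<lambda>v. u v *\<^sub>R v"]
        zero T(4,5) by simp_all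
    then show "x \<in> convex hull (S \<inter> {x. a \<bullet> x = b})"
      unfolding convex_hull_explicit using T' T(3) by blast
  qed
qed

abbreviation tot_pos_hull :: "(real^3) set" where
  "tot_pos_hull \<equiv> convex hull tot_pos_O"

lemma tot_pos_hull_pos: "x \<in> tot_pos_hull \<Longrightarrow> 0 < x $ i"
proof -
  have "convex {x :: real^3. \<forall>i. 0 < x $ i}"
  proof (rule convexI, clarsimp)
    fix x y :: "real^3" and u v :: real and i
    assume "\<forall>i. 0 < x $ i" "\<forall>i. 0 < y $ i" "0 \<le> u" "0 \<le> v" "u + v = 1"
    then show "0 < u * x $ i + v * y $ i"
      by (cases "u = 0") (auto intro!: add_pos_nonneg simp: less_imp_le)
  qed
  then have "tot_pos_hull \<subseteq> {x. \<forall>i. 0 < x $ i}"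
    by (rule hull_minimal[rotated]) (auto simp: tot_pos_O_def totally_positive_def)
  then show "x \<in> tot_pos_hull \<Longrightarrow> 0 < x $ i" by auto
qed

lemma inner_mult_unit: "v * u = 1 \<Longrightarrow> (a * v) \<bullet> (u * x) = a \<bullet> (x :: real^3)"
  by (metis inner_mult_assoc mult.assoc mult_1_left)

lemma facet_normal_ge_1_on_hull:
  assumes k: "k \<in> {1,2}" and v: "v \<in> tot_pos_units_O" and x: "x \<in> tot_pos_hull"
  shows "1 \<le> (facet_normal k * v) \<bullet> x"
proof -
  have "1 \<le> (facet_normal k * v) \<bullet> y" if "y \<in> tot_pos_O" for y
    using facet_normal_ge_1[OF k tot_pos_O_mult] v tot_pos_units_O_subset that
    by (auto simp flip: inner_mult_assoc)
  then have "tot_pos_hull \<subseteq> {x. 1 \<le> (facet_normal k * v) \<bullet> x}"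
    by (intro hull_minimal) (auto simp: convex_halfspace_ge)
  then show ?thesis using x by blast
qed

lemma tot_pos_hull_Int_facet_plane:
  assumes k: "k \<in> {1,2}" and u: "u \<in> tot_pos_units_O" "v \<in> tot_pos_units_O" "v * u = 1"
  shows "tot_pos_hull \<inter> {x. (facet_normal k * v) \<bullet> x = 1} = (\<lambda>x. u * x) ` (convex hull facet_vertices k)"
proof -
  have "tot_pos_O \<inter> {x. (facet_normal k * v) \<bullet> x = 1} = (\<lambda>x. u * x) ` facet_vertices k"
  proof (intro equalityI subsetI)
    fix y assume y: "y \<in> tot_pos_O \<inter> {x. (facet_normal k * v) \<bullet> x = 1}"
    then have "v * y \<in> facet_vertices k"
      using facet_normal_eq_1_iff[OF k tot_pos_O_mult] u(2) tot_pos_units_O_subset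
      by (auto simp flip: inner_mult_assoc)
    moreover have "y = u * (v * y)" using u(3) by (metis mult.assoc mult.commute mult_1_left)
    ultimately show "y \<in> (\<lambda>x. u * x) ` facet_vertices k" by blast
  next
    fix y assume "y \<in> (\<lambda>x. u * x) ` facet_vertices k"
    then obtain P where P: "P \<in> facet_vertices k" "y = u * P" by blast
    then show "y \<in> tot_pos_O \<inter> {x. (facet_normal k * v) \<bullet> x = 1}"
      using facet_vertices_subset[OF k] tot_pos_O_mult u(1) tot_pos_units_O_subset
        facet_normal_eq_1_iff[OF k] inner_mult_unit[OF u(3)]
      by auto
  qed
  moreover have "linear (\<lambda>x :: real^3. u * x)" by (simp add: linearI distrib_left)
  ultimately show ?thesis
    using convex_hull_Int_supporting_hyperplane facet_normal_ge_1_on_hull[OF k u(2)]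
    by (metis convex_hull_linear_image hull_inc)
qed

lemma unit_image_facet_triangle_facet_of:
  assumes k: "k \<in> {1,2}" and u: "u \<in> tot_pos_units_O"
  shows "(\<lambda>x. u * x) ` (convex hull facet_vertices k) facet_of tot_pos_hull"
proof -
  obtain v where v: "v \<in> tot_pos_units_O" "v * u = 1" using tot_pos_units_O_inverse[OF u] by metis
  define F where "F = (\<lambda>x. u * x) ` (convex hull facet_vertices k)"
  have F_eq: "F = tot_pos_hull \<inter> {x. (facet_normal k * v) \<bullet> x = 1}"
    unfolding F_def using tot_pos_hull_Int_facet_plane[OF k u v] by simp
  have face: "F face_of tot_pos_hull"
    unfolding F_eq by (rule face_of_Int_supporting_hyperplane_ge) (use facet_normal_ge_1_on_hull[OF k v(1)] in auto)
  have "linear (\<lambda>x :: real^3. u * x)" "inj (\<lambda>x :: real^3. u * x)"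
    using v(2) by (auto simp: linearI distrib_left inj_def) (metis mult.assoc mult_1_left)
  then have dim_F: "aff_dim F = 2" unfolding F_def using aff_dim_facet_triangle[OF k] by simp
  have "2 *\<^sub>R u \<in> tot_pos_hull"
    using tot_pos_O_scaleR[of u 2] u tot_pos_units_O_subset by (auto intro: hull_inc)
  moreover have "(facet_normal k * v) \<bullet> (2 *\<^sub>R u) = 2"
    using k inner_mult_unit[OF v(2), of _ 1] facet_normal_elem_O[of 1 0 0] by (auto simp: elem_O_1)
  ultimately have "F \<noteq> tot_pos_hull" unfolding F_eq by force
  then have "aff_dim F < aff_dim tot_pos_hull"
    using face_of_aff_dim_lt[OF convex_convex_hull face] by simp
  moreover have "aff_dim tot_pos_hull \<le> 3" using aff_dim_le_DIM[of tot_pos_hull] by simp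
  ultimately have "aff_dim F = aff_dim tot_pos_hull - 1" using dim_F by simp
  then show ?thesis using face dim_F unfolding F_def[symmetric] facet_of_def by auto
qed

section \<open>Every facet is of the form \<open>u T\<^sub>k\<close>\<close>

lemma abs_inner_le:
  fixes x y :: "real^'n" and D R :: real
  assumes "\<And>i. \<bar>x $ i\<bar> \<le> D" "\<And>i. \<bar>y $ i\<bar> \<le> R"
  shows "\<bar>x \<bullet> y\<bar> \<le> CARD('n) * (D * R)"
proof -
  have "\<bar>x \<bullet> y\<bar> \<le> (\<Sum>i\<in>UNIV. \<bar>x $ i\<bar> * \<bar>y $ i\<bar>)"
    unfolding inner_vec_def inner_real_def abs_mult[symmetric] by (rule sum_abs)
  also have "\<dots> \<le> (\<Sum>i\<in>(UNIV :: 'n set). D * R)"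
    by (intro sum_mono) (meson assms abs_ge_zero mult_mono order_trans)
  finally show ?thesis by simp
qed

lemma component_le_inner:
  fixes a y :: "real^'n"
  assumes "\<And>i. 0 \<le> a $ i" "\<And>i. 0 \<le> y $ i"
  shows "a $ j * y $ j \<le> a \<bullet> y"
  unfolding inner_vec_def inner_real_def by (rule member_le_sum) (simp_all add: assms)

text \<open>The trace-dual basis of \<open>1, w, w\<^sup>2\<close>.\<close>
lemma elem_O_coeffs:
  "elem_R 1 (-1/7) (-3/7) \<bullet> elem_O a b c = of_int a"
  "elem_R (-1/7) (2/7) (1/7) \<bullet> elem_O a b c = of_int b"
  "elem_R (-3/7) (1/7) (2/7) \<bullet> elem_O a b c = of_int c"
  by (simp_all add: inner_elem_R_elem_O)

lemma elem_O_coeffs_bounded: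
  assumes "\<And>i. \<bar>elem_O a b c $ i\<bar> \<le> R"
  shows "\<bar>of_int a\<bar> \<le> 3 * R" "\<bar>of_int b\<bar> \<le> 3 * R" "\<bar>of_int c\<bar> \<le> 3 * R"
proof -
  have duals: "\<forall>i. \<bar>elem_R 1 (-1/7) (-3/7) $ i\<bar> \<le> 1" "\<forall>i. \<bar>elem_R (-1/7) (2/7) (1/7) $ i\<bar> \<le> 1"
    "\<forall>i. \<bar>elem_R (-3/7) (1/7) (2/7) $ i\<bar> \<le> 1"
    unfolding forall_3 elem_R_component w1_sq w2_sq w3_sq abs_le_iff
    using w_emb_bounds by (simp_all add: ring_distribs)
  have bound: "\<bar>x \<bullet> elem_O a b c\<bar> \<le> 3 * R" if "\<forall>i. \<bar>x $ i\<bar> \<le> 1" for x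
    using abs_inner_le[of x 1 "elem_O a b c" R] that assms by simp
  show "\<bar>of_int a\<bar> \<le> 3 * R" "\<bar>of_int b\<bar> \<le> 3 * R" "\<bar>of_int c\<bar> \<le> 3 * R"
    using bound[OF duals(1)] bound[OF duals(2)] bound[OF duals(3)] unfolding elem_O_coeffs .
qed

lemma finite_bounded_ints_O: "finite {v \<in> ints_O. \<forall>i. \<bar>v $ i\<bar> \<le> R}"
proof -
  define N where "N = \<lceil>3 * R\<rceil>"
  have "{v \<in> ints_O. \<forall>i. \<bar>v $ i\<bar> \<le> R} \<subseteq>
      (\<lambda>(a, b, c). elem_O a b c) ` ({-N..N} \<times> {-N..N} \<times> {-N..N})"
  proof
    fix v assume v: "v \<in> {v \<in> ints_O. \<forall>i. \<bar>v $ i\<bar> \<le> R}"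
    then obtain a b c where abc: "v = elem_O a b c" by (auto simp: ints_O_iff)
    then have "\<bar>of_int a\<bar> \<le> 3 * R" "\<bar>of_int b\<bar> \<le> 3 * R" "\<bar>of_int c\<bar> \<le> 3 * R"
      using elem_O_coeffs_bounded[of a b c R] v by auto
    then have "\<bar>a\<bar> \<le> N" "\<bar>b\<bar> \<le> N" "\<bar>c\<bar> \<le> N" unfolding N_def by linarith+
    then show "v \<in> (\<lambda>(a, b, c). elem_O a b c) ` ({-N..N} \<times> {-N..N} \<times> {-N..N})"
      using abc by (auto simp: abs_le_iff intro!: image_eqI[of _ _ "(a, b, c)"])
  qed
  then show ?thesis by (rule finite_subset) auto
qed

lemma facet_normal_component_ge: "k \<in> {1,2} \<Longrightarrow> 1/10 \<le> facet_normal k $ i"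
  using exhaust_3[of i] w_emb_bounds
  by (auto simp: facet_normal_def elem_R_component w1_sq w2_sq w3_sq algebra_simps)

lemma finite_units_facet_normal_le:
  assumes x: "\<And>i. 0 < x $ i" and k: "k \<in> {1,2}"
  shows "finite {v \<in> tot_pos_units_O. facet_normal k \<bullet> (v * x) \<le> B}"
proof -
  define R where "R = (\<Sum>i\<in>UNIV. 10 * \<bar>B\<bar> / x $ i)"
  have "\<bar>v $ j\<bar> \<le> R" if v: "v \<in> tot_pos_units_O" "facet_normal k \<bullet> (v * x) \<le> B" for v j
  proof -
    have vx: "0 < v $ i * x $ i" for i using x tot_pos_units_O_pos[OF v(1)] by simp
    have "(1/10) * (v $ j * x $ j) \<le> facet_normal k $ j * (v $ j * x $ j)"
      using mult_right_mono[OF facet_normal_component_ge[OF k] less_imp_le[OF vx]] .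
    also have "\<dots> \<le> facet_normal k \<bullet> (v * x)"
    proof -
      have "0 \<le> facet_normal k $ i" for i using facet_normal_component_ge[OF k, of i] by linarith
      then show ?thesis using component_le_inner[of "facet_normal k" "v * x" j] vx by (simp add: less_imp_le)
    qed
    finally have "v $ j * x $ j \<le> 10 * \<bar>B\<bar>" using v(2) by linarith
    then have "v $ j \<le> 10 * \<bar>B\<bar> / x $ j" using x[of j] by (simp add: pos_le_divide_eq)
    also have "\<dots> \<le> R"
      unfolding R_def using x by (intro member_le_sum) (auto simp: less_imp_le)
    finally show ?thesis using tot_pos_units_O_pos[OF v(1), of j] by simp
  qed
  then have "{v \<in> tot_pos_units_O. facet_normal k \<bullet> (v * x) \<le> B} \<subseteq> {v \<in> ints_O. \<forall>i. \<bar>v $ i\<bar> \<le> R}"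
    by (auto simp: tot_pos_units_O_def units_O_def)
  then show ?thesis using finite_bounded_ints_O by (rule finite_subset)
qed

lemma ex_min_if_finite_sublevel:
  fixes f :: "'a \<Rightarrow> 'b::linorder"
  assumes "a \<in> A" "finite {x \<in> A. f x \<le> f a}"
  obtains m where "m \<in> A" "\<And>x. x \<in> A \<Longrightarrow> f m \<le> f x"
proof -
  let ?S = "{x \<in> A. f x \<le> f a}"
  have "?S \<noteq> {}" using assms(1) by auto
  then have m: "arg_min_on f ?S \<in> ?S" "\<And>x. x \<in> ?S \<Longrightarrow> f (arg_min_on f ?S) \<le> f x"
    using arg_min_if_finite[OF assms(2), of f] by (auto simp: not_less[symmetric])
  show ?thesis
  proof (rule that)
    show "arg_min_on f ?S \<in> A" using m(1) by simp
    show "f (arg_min_on f ?S) \<le> f x" if "x \<in> A" for x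
      using m that by (cases "f x \<le> f a") auto
  qed
qed

lemma ex_min_facet_normal_unit:
  assumes x: "\<And>i. 0 < x $ i"
  obtains v0 k0 where "v0 \<in> tot_pos_units_O" "k0 \<in> {1,2}"
    "\<And>v k. v \<in> tot_pos_units_O \<Longrightarrow> k \<in> {1,2} \<Longrightarrow> facet_normal k0 \<bullet> (v0 * x) \<le> facet_normal k \<bullet> (v * x)"
proof -
  define f where "f = (\<lambda>(v, k). facet_normal k \<bullet> (v * x))"
  let ?B = "f (1, 1)"
  have "{p \<in> tot_pos_units_O \<times> {1,2}. f p \<le> ?B} \<subseteq>
      {v \<in> tot_pos_units_O. facet_normal 1 \<bullet> (v * x) \<le> ?B} \<times> {1} \<union>
      {v \<in> tot_pos_units_O. facet_normal 2 \<bullet> (v * x) \<le> ?B} \<times> {2}"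
    by (auto simp: f_def)
  then have fin: "finite {p \<in> tot_pos_units_O \<times> {1,2}. f p \<le> ?B}"
    by (rule finite_subset) (simp add: finite_units_facet_normal_le[OF x])
  obtain p where p: "p \<in> tot_pos_units_O \<times> {1,2}" "\<And>q. q \<in> tot_pos_units_O \<times> {1,2} \<Longrightarrow> f p \<le> f q"
    by (rule ex_min_if_finite_sublevel[OF _ fin]) (use one_in_tot_pos_units_O in auto)
  obtain v0 k0 where "p = (v0, k0)" by fastforce
  with p show ?thesis
    by (intro that[of v0 k0]) (auto simp: f_def)
qed

text \<open>Take the unit \<open>v\<^sub>0\<close> and index \<open>k\<^sub>0\<close> minimising \<open>\<lambda>\<^sub>k(v x)\<close>; after rescaling, \<open>v\<^sub>0 x\<close> satisfies
  all facet inequalities with equality for \<open>\<lambda>\<^sub>k\<^sub>0\<close>, so it lies in \<open>T\<^sub>k\<^sub>0\<close>.\<close>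
lemma positive_in_cone_over_facet:
  assumes x: "\<And>i. 0 < x $ i"
  obtains u k m p where "u \<in> tot_pos_units_O" "k \<in> {1,2}" "0 < m"
    "p \<in> (\<lambda>y. u * y) ` (convex hull facet_vertices k)" "x = m *\<^sub>R p"
proof -
  obtain v0 k0 where v0: "v0 \<in> tot_pos_units_O" "k0 \<in> {1,2}"
    and min: "\<And>v k. v \<in> tot_pos_units_O \<Longrightarrow> k \<in> {1,2} \<Longrightarrow>
                facet_normal k0 \<bullet> (v0 * x) \<le> facet_normal k \<bullet> (v * x)"
    using ex_min_facet_normal_unit[OF x] by metis
  define m where "m = facet_normal k0 \<bullet> (v0 * x)"
  have m: "0 < m"
    unfolding m_def using facet_normal_component_ge[OF v0(2)] x tot_pos_units_O_pos[OF v0(1)]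
    by (intro inner_pos_if_components_pos) (auto intro: less_le_trans[of 0 "1/10"])
  define q where "q = (1/m) *\<^sub>R (v0 * x)"
  have "facet_normal k0 \<bullet> q = 1" using m by (simp add: q_def m_def)
  moreover have "1 \<le> (facet_normal k * v) \<bullet> q" if "v \<in> tot_pos_units_O" "k \<in> {1,2}" for v k
  proof -
    have "m \<le> facet_normal k \<bullet> ((v * v0) * x)"
      unfolding m_def by (rule min[OF tot_pos_units_O_mult[OF that(1) v0(1)] that(2)])
    then show ?thesis
      using m unfolding q_def inner_scaleR_right inner_mult_assoc[symmetric] mult.assoc
      by (simp add: field_simps)
  qed
  ultimately have "q \<in> convex hull facet_vertices k0" by (rule mem_facet_triangle[OF v0(2)])
  moreover obtain u0 where u0: "u0 \<in> tot_pos_units_O" "u0 * v0 = 1"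
    using tot_pos_units_O_inverse[OF v0(1)] by metis
  moreover have "x = m *\<^sub>R (u0 * q)"
    using m u0(2) by (simp add: q_def mult.assoc flip: mult.assoc)
  ultimately show ?thesis using that v0(2) m by blast
qed

lemma convex_hull_scaleR_ge_1:
  fixes S :: "'a::real_vector set"
  assumes S: "\<And>s n. s \<in> S \<Longrightarrow> 1 \<le> n \<Longrightarrow> real n *\<^sub>R s \<in> S"
    and y: "y \<in> convex hull S" and t: "1 \<le> t"
  shows "t *\<^sub>R y \<in> convex hull S"
proof -
  have "t *\<^sub>R s \<in> convex hull S" if s: "s \<in> S" for s
  proof -
    define N where "N = nat \<lceil>t\<rceil> + 1"
    have N: "1 \<le> N" "t < real N" "0 < real N - 1" using t unfolding N_def by linarith+
    define \<theta> where "\<theta> = (t - 1) / (real N - 1)"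
    have \<theta>: "0 \<le> \<theta>" "\<theta> \<le> 1" using t N unfolding \<theta>_def by (auto simp: field_simps)
    have "\<theta> * (real N - 1) = t - 1" using N(3) by (simp add: \<theta>_def)
    then have "(1 - \<theta>) + \<theta> * real N = t" by (simp add: algebra_simps)
    then have "t *\<^sub>R s = (1 - \<theta>) *\<^sub>R s + \<theta> *\<^sub>R (real N *\<^sub>R s)"
      by (metis scaleR_add_left scaleR_scaleR)
    moreover have "s \<in> convex hull S" "real N *\<^sub>R s \<in> convex hull S"
      using s S[OF s N(1)] by (auto intro: hull_inc)
    ultimately show ?thesis
      using convexD[OF convex_convex_hull, of s S "real N *\<^sub>R s" "1 - \<theta>" \<theta>] \<theta> by simp
  qed
  then have "convex hull ((\<lambda>x. t *\<^sub>R x) ` S) \<subseteq> convex hull S"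
    by (intro hull_minimal) (auto simp: convex_convex_hull)
  then show ?thesis using y by (auto simp: convex_hull_scaling)
qed

lemma supporting_hyperplane_through_0:
  fixes C :: "'a::euclidean_space set"
  assumes C: "convex C" "\<And>y t. y \<in> C \<Longrightarrow> 1 \<le> t \<Longrightarrow> t *\<^sub>R y \<in> C"
    and z: "z \<in> C" "z \<notin> rel_interior C"
    and p: "p \<in> C" "z = m *\<^sub>R p" "1 < m"
  obtains a where "a \<noteq> 0" "a \<bullet> z = 0" "\<And>y. y \<in> C \<Longrightarrow> 0 \<le> a \<bullet> y"
proof -
  obtain a where a: "a \<noteq> 0" "\<And>y. y \<in> C \<Longrightarrow> a \<bullet> z \<le> a \<bullet> y"
    using supporting_hyperplane_rel_boundary[OF C(1) z] by metis
  have "a \<bullet> z \<le> a \<bullet> (2 *\<^sub>R z)" by (rule a(2), rule C(2)[OF z(1)]) simp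
  then have "0 \<le> a \<bullet> z" by simp
  moreover have "(m - 1) * (a \<bullet> p) \<le> 0"
    using a(2)[OF p(1)] p(2) by (simp add: algebra_simps)
  then have "a \<bullet> z \<le> 0" using p(2,3) by (simp add: mult_le_0_iff)
  ultimately have "a \<bullet> z = 0" by simp
  with a show ?thesis using that by fastforce
qed

lemma nonneg_component_if_dominant_powers:
  fixes a E :: "real^'n"
  assumes pos: "\<And>i. 0 < E $ i" and dom: "\<And>i. i \<noteq> j \<Longrightarrow> E $ i < E $ j"
    and nonneg: "\<And>n. 0 \<le> a \<bullet> E ^ n"
  shows "0 \<le> a $ j"
proof -
  have eq: "a \<bullet> E ^ n / E $ j ^ n = (\<Sum>i\<in>UNIV. a $ i * (E $ i / E $ j) ^ n)" for n
    by (simp add: inner_vec_def vector_power_component sum_divide_distrib power_divide)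
  have "(\<lambda>n. a $ i * (E $ i / E $ j) ^ n) \<longlonglongrightarrow> (if i = j then a $ j else 0)" for i
  proof (cases "i = j")
    case False
    then have "(\<lambda>n. (E $ i / E $ j) ^ n) \<longlonglongrightarrow> 0"
      using pos dom by (intro LIMSEQ_realpow_zero) (auto simp: less_imp_le)
    then show ?thesis using False tendsto_mult_right_zero by auto
  qed (use pos in \<open>simp add: less_imp_neq[symmetric]\<close>)
  then have "(\<lambda>n. a \<bullet> E ^ n / E $ j ^ n) \<longlonglongrightarrow> (\<Sum>i\<in>UNIV. if i = j then a $ j else 0)"
    unfolding eq by (rule tendsto_sum)
  then have "(\<lambda>n. a \<bullet> E ^ n / E $ j ^ n) \<longlonglongrightarrow> a $ j" by simp
  then show ?thesis
    by (rule LIMSEQ_le_const) (use nonneg pos in \<open>auto intro!: exI[of _ 0] divide_nonneg_pos\<close>)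
qed

lemma ex_neg_component:
  fixes a z :: "real^'n"
  assumes "a \<noteq> 0" "\<And>i. 0 < z $ i" "a \<bullet> z = 0"
  obtains j where "a $ j < 0"
proof (rule ccontr)
  assume "\<not> thesis"
  then have nonneg: "0 \<le> a $ i * z $ i" for i using that assms(2) by (metis less_imp_le mult_nonneg_nonneg not_le)
  then have "a $ i * z $ i = 0" for i
    using assms(3) sum_nonneg_eq_0_iff[of UNIV "\<lambda>i. a $ i * z $ i"] by (simp add: inner_vec_def)
  then have "a = 0" using assms(2) by (simp add: vec_eq_iff) (metis less_irrefl)
  then show False using assms(1) by simp
qed

lemma ex_dominant_tot_pos_O: "\<exists>E\<in>tot_pos_O. \<forall>i. i \<noteq> j \<longrightarrow> E $ i < E $ j"
proof -
  have "elem_O 2 1 0 \<in> tot_pos_O" "elem_O 3 (-1) (-1) \<in> tot_pos_O" "elem_O 0 0 1 \<in> tot_pos_O"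
    using elems_in_tot_pos_units_O tot_pos_units_O_subset by auto
  moreover have "\<forall>i. i \<noteq> 1 \<longrightarrow> elem_O 2 1 0 $ i < elem_O 2 1 0 $ 1"
    "\<forall>i. i \<noteq> 2 \<longrightarrow> elem_O 3 (-1) (-1) $ i < elem_O 3 (-1) (-1) $ 2"
    "\<forall>i. i \<noteq> 3 \<longrightarrow> elem_O 0 0 1 $ i < elem_O 0 0 1 $ 3"
    using w_emb_bounds by (auto simp: forall_3 elem_O_components)
  ultimately show ?thesis using exhaust_3[of j] by blast
qed

text \<open>Powers of a unit with a strictly dominant real embedding force each coordinate of a
  functional that is nonnegative on \<open>tot_pos_O\<close> to be nonnegative.\<close>
lemma nonneg_on_tot_pos_O_nonvanishing:
  assumes "a \<noteq> 0" "\<And>y. y \<in> tot_pos_O \<Longrightarrow> 0 \<le> a \<bullet> y" "\<And>i. 0 < z $ i"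
  shows "a \<bullet> z \<noteq> 0"
proof
  assume "a \<bullet> z = 0"
  then obtain j where j: "a $ j < 0" using ex_neg_component assms(1,3) by blast
  obtain E where E: "E \<in> tot_pos_O" "\<And>i. i \<noteq> j \<Longrightarrow> E $ i < E $ j"
    using ex_dominant_tot_pos_O by blast
  have "0 \<le> a $ j"
    using E assms(2) tot_pos_O_power
    by (intro nonneg_component_if_dominant_powers[of E j]) (auto simp: tot_pos_O_def totally_positive_def)
  with j show False by simp
qed

lemma face_point_not_proper_multiple:
  assumes F: "F face_of tot_pos_hull" "F \<noteq> tot_pos_hull" "z \<in> F"
    and p: "p \<in> tot_pos_hull" "z = m *\<^sub>R p"
  shows "m \<le> 1"
proof (rule ccontr)
  assume "\<not> m \<le> 1"
  have z: "z \<in> tot_pos_hull" "z \<notin> rel_interior tot_pos_hull"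
    using F face_of_imp_subset face_of_disjoint_rel_interior by blast+
  have "y \<in> tot_pos_hull \<Longrightarrow> 1 \<le> t \<Longrightarrow> t *\<^sub>R y \<in> tot_pos_hull" for y t
    by (rule convex_hull_scaleR_ge_1) (auto intro: tot_pos_O_scaleR)
  then obtain a where "a \<noteq> 0" "a \<bullet> z = 0" "\<And>y. y \<in> tot_pos_hull \<Longrightarrow> 0 \<le> a \<bullet> y"
    using supporting_hyperplane_through_0[OF convex_convex_hull _ z p] \<open>\<not> m \<le> 1\<close> by (metis not_le)
  then show False
    using nonneg_on_tot_pos_O_nonvanishing tot_pos_hull_pos z(1) by (meson hull_inc)
qed

lemma facet_of_tot_pos_hull_cases:
  assumes "F facet_of tot_pos_hull"
  obtains u k where "u \<in> tot_pos_units_O" "k \<in> {1,2}" "F = (\<lambda>x. u * x) ` (convex hull facet_vertices k)"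
proof -
  have F: "F face_of tot_pos_hull" "F \<noteq> {}" "aff_dim F = aff_dim tot_pos_hull - 1"
    using assms by (auto simp: facet_of_def)
  then have F_sub: "F \<subseteq> tot_pos_hull" "F \<noteq> tot_pos_hull" by (auto dest: face_of_imp_subset)
  obtain z where z: "z \<in> rel_interior F"
    using F(1,2) rel_interior_eq_empty face_of_imp_convex by blast
  then have zF: "z \<in> F" using rel_interior_subset by blast
  then have "\<And>i. 0 < z $ i" using tot_pos_hull_pos F_sub(1) by blast
  then obtain u k m p where u: "u \<in> tot_pos_units_O" and k: "k \<in> {1,2}" and m: "0 < m"
    and p: "p \<in> (\<lambda>y. u * y) ` (convex hull facet_vertices k)" and z_eq: "z = m *\<^sub>R p"
    by (rule positive_in_cone_over_facet)
  define G where "G = (\<lambda>y. u * y) ` (convex hull facet_vertices k)"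
  obtain v where v: "v \<in> tot_pos_units_O" "v * u = 1" using tot_pos_units_O_inverse[OF u] by metis
  have G_eq: "G = tot_pos_hull \<inter> {x. (facet_normal k * v) \<bullet> x = 1}"
    unfolding G_def using tot_pos_hull_Int_facet_plane[OF k u v] by simp
  have G: "G facet_of tot_pos_hull" unfolding G_def by (rule unit_image_facet_triangle_facet_of[OF k u])
  have p_G: "(facet_normal k * v) \<bullet> p = 1" "p \<in> tot_pos_hull" using p G_eq G_def by auto
  have "1 \<le> (facet_normal k * v) \<bullet> z"
    using facet_normal_ge_1_on_hull[OF k v(1)] zF F_sub by blast
  then have "1 \<le> m" using z_eq p_G(1) by simp
  moreover have "m \<le> 1" by (rule face_point_not_proper_multiple[OF F(1) F_sub(2) zF p_G(2) z_eq])
  ultimately have "z \<in> G" using z_eq p G_def by simp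
  then have "F \<subseteq> G" using subset_of_face_of G F_sub(1) z by (auto simp: facet_of_def)
  moreover have "G \<subseteq> tot_pos_hull" using G by (auto simp: facet_of_def dest: face_of_imp_subset)
  ultimately have "F face_of G" using face_of_subset F(1) by blast
  moreover have "aff_dim F = aff_dim G" using F(3) G by (simp add: facet_of_def)
  moreover have "convex G" using G by (auto simp: facet_of_def dest: face_of_imp_convex)
  ultimately have "F = G" using face_of_aff_dim_lt[of G F] by (metis less_irrefl)
  then show ?thesis using that u k G_def by blast
qed

theorem proposition3p2:
  shows "{F. F facet_of (convex hull tot_pos_O)} =
           {(\<lambda>x. u * x) ` triangle1 | u. u \<in> tot_pos_units_O} \<union>
           {(\<lambda>x. u * x) ` triangle2 | u. u \<in> tot_pos_units_O}"
proof (intro equalityI subsetI)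
  fix F assume "F \<in> {F. F facet_of tot_pos_hull}"
  then obtain u k where "u \<in> tot_pos_units_O" "k \<in> {1,2}" "F = (\<lambda>x. u * x) ` (convex hull facet_vertices k)"
    using facet_of_tot_pos_hull_cases by blast
  then show "F \<in> {(\<lambda>x. u * x) ` triangle1 | u. u \<in> tot_pos_units_O} \<union>
                 {(\<lambda>x. u * x) ` triangle2 | u. u \<in> tot_pos_units_O}"
    unfolding triangle_eq by auto
next
  fix F assume "F \<in> {(\<lambda>x. u * x) ` triangle1 | u. u \<in> tot_pos_units_O} \<union>
                    {(\<lambda>x. u * x) ` triangle2 | u. u \<in> tot_pos_units_O}"
  then show "F \<in> {F. F facet_of tot_pos_hull}"
    unfolding triangle_eq using unit_image_facet_triangle_facet_of[of 1] unit_image_facet_triangle_facet_of[of 2]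
    by auto
qed

end
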